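(* Let $f$ be a complex-valued function that is holomorphic on an open neighborhood of the closed upper half-plane $\{x+yi : y\ge 0\}$ except at finitely many isolated singular points, each of which has strictly positive imaginary part. Suppose that: (i) for all real $x$ with $|x|$ sufficiently large, the improper integral $\int_{0}^{\infty} f(x+yi)\,dy$ converges, and $\int_{0}^{\infty} f(x+yi)\,dy \to 0$ as $x\to+\infty$ and as $x\to-\infty$; (ii) for each bounded interval $I\subset\mathbb{R}$, $\int_{I} f(x+yi)\,dx \to 0$ as $y\to\infty$. Then the improper integral $\int_{-\infty}^{\infty} f(x)\,dx$ (that is, $\lim_{A,B\to+\infty}\int_{-A}^{B} f(x)\,dx$) exists and equals $2\pi i$ times the sum of the residues of $f$ at its singular points in the upper half-plane.
   Context: The residue of $f$ at an isolated singularity $z_0$ is the coefficient of $(z-z_0)^{-1}$ in the Laurent expansion of $f$ about $z_0$. *)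

theory Defs
  imports "HOL-Complex_Analysis.Complex_Analysis"
begin

definition has_improper_integral_0_inf :: "(real \<Rightarrow> complex) \<Rightarrow> complex \<Rightarrow> bool" where
  "has_improper_integral_0_inf g L \<longleftrightarrow>
     (\<forall>T\<ge>0. g integrable_on {0..T}) \<and> ((\<lambda>T. integral {0..T} g) \<longlongrightarrow> L) at_top"

end

theory Submission
  imports Defs
begin

text \<open>Integrate \<open>f\<close> around the rectangle with corners \<open>-A\<close> and \<open>B + \<i>Y\<close>. Once \<open>-A < Re z < B\<close>
  and \<open>Im z < Y\<close> for every singularity \<open>z\<close>, the residue theorem gives
  \<open>\<integral>\<^sub>-\<^sub>A\<^sup>B f(x) dx + \<i> V(B,Y) - H(Y) - \<i> V(-A,Y) = 2\<pi>\<i> \<Sum> res f\<close>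
  with \<open>V(x,Y) = \<integral>\<^sub>0\<^sup>Y f(x+\<i>y) dy\<close> and \<open>H(Y) = \<integral>\<^sub>-\<^sub>A\<^sup>B f(x+\<i>Y) dx\<close>. Letting \<open>Y \<rightarrow> \<infinity>\<close>,
  (ii) kills \<open>H\<close> and (i) turns \<open>V(x,Y)\<close> into \<open>F(x)\<close>, so
  \<open>\<integral>\<^sub>-\<^sub>A\<^sup>B f(x) dx = 2\<pi>\<i> \<Sum> res f - \<i> F(B) + \<i> F(-A)\<close>; now let \<open>A, B \<rightarrow> \<infinity>\<close>.\<close>

lemma has_contour_integral_linepath_same_Im_iff:
  fixes f :: "complex \<Rightarrow> complex"
  assumes "a < b"
  shows "(f has_contour_integral I) (linepath (Complex a c) (Complex b c)) \<longleftrightarrow>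
         ((\<lambda>x. f (Complex x c)) has_integral I) {a..b}"
proof -
  define g where "g = (\<lambda>w. f (w + \<i> * of_real c))"
  have path_shift: "linepath (Complex a c) (Complex b c) t = linepath (of_real a) (of_real b) t + \<i> * of_real c"
    for t by (simp add: linepath_def complex_eq_iff algebra_simps)
  have length_eq: "Complex b c - Complex a c = of_real b - of_real a"
    by (simp add: complex_eq_iff)
  have "(f has_contour_integral I) (linepath (Complex a c) (Complex b c)) \<longleftrightarrow>
        (g has_contour_integral I) (linepath (of_real a) (of_real b))"
    unfolding has_contour_integral_linepath g_def path_shift length_eq ..
  also have "\<dots> \<longleftrightarrow> ((\<lambda>x. g (of_real x)) has_integral I) {a..b}"
    using has_contour_integral_linepath_Reals_iff[of "of_real a" "of_real b" g I] assms by simp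
  also have "(\<lambda>x. g (of_real x)) = (\<lambda>x. f (Complex x c))"
    by (simp add: g_def Complex_eq)
  finally show ?thesis .
qed

lemma contour_integral_linepath_same_Im:
  fixes f :: "complex \<Rightarrow> complex"
  assumes "a < b"
  shows "contour_integral (linepath (Complex a c) (Complex b c)) f = integral {a..b} (\<lambda>x. f (Complex x c))"
proof (cases "(\<lambda>x. f (Complex x c)) integrable_on {a..b}")
  case True
  then have "(f has_contour_integral integral {a..b} (\<lambda>x. f (Complex x c)))
      (linepath (Complex a c) (Complex b c))"
    using has_contour_integral_linepath_same_Im_iff[OF assms] by (simp add: has_integral_integral)
  then show ?thesis
    by (rule contour_integral_unique)
next
  case False
  then have "\<not> f contour_integrable_on linepath (Complex a c) (Complex b c)"
    using has_contour_integral_linepath_same_Im_iff[OF assms]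
    by (auto simp: contour_integrable_on_def integrable_on_def)
  with False show ?thesis
    by (simp add: not_integrable_contour_integral not_integrable_integral)
qed

lemma contour_integral_linepath_same_Re:
  fixes f :: "complex \<Rightarrow> complex"
  assumes "c < d"
  shows "contour_integral (linepath (Complex a c) (Complex a d)) f = \<i> * integral {c..d} (\<lambda>y. f (Complex a y))"
proof (cases "(\<lambda>y. f (Complex a y)) integrable_on {c..d}")
  case True
  then have "(f has_contour_integral \<i> * integral {c..d} (\<lambda>y. f (Complex a y)))
      (linepath (Complex a c) (Complex a d))"
    using has_contour_integral_linepath_same_Re_iff[of "Complex a c" a "Complex a d" c d f] assms
    by (simp add: has_integral_integral)
  then show ?thesis
    by (rule contour_integral_unique)
next
  case False
  then have "\<not> f contour_integrable_on linepath (Complex a c) (Complex a d)"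
    using has_contour_integral_linepath_same_Re_iff[of "Complex a c" a "Complex a d" c d f] assms
    by (auto simp: contour_integrable_on_def integrable_on_def)
  with False show ?thesis
    by (simp add: not_integrable_contour_integral not_integrable_integral)
qed

lemma contour_integral_rectpath_eq_sides:
  fixes f :: "complex \<Rightarrow> complex"
  assumes "a < b" "c < d"
    and "continuous_on (path_image (rectpath (Complex a c) (Complex b d))) f"
  shows "contour_integral (rectpath (Complex a c) (Complex b d)) f =
           integral {a..b} (\<lambda>x. f (Complex x c)) + \<i> * integral {c..d} (\<lambda>y. f (Complex b y))
         - integral {a..b} (\<lambda>x. f (Complex x d)) - \<i> * integral {c..d} (\<lambda>y. f (Complex a y))"
proof -
  define z1 z2 z3 z4 where "z1 = Complex a c" "z2 = Complex b c" "z3 = Complex b d" "z4 = Complex a d"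
  have sides: "path_image (rectpath z1 z3) =
      closed_segment z1 z2 \<union> closed_segment z2 z3 \<union> closed_segment z3 z4 \<union> closed_segment z4 z1"
    by (simp add: rectpath_def Let_def path_image_join z1_z2_z3_z4_def Un_assoc)
  have cont: "continuous_on (closed_segment z1 z2) f" "continuous_on (closed_segment z2 z3) f"
    "continuous_on (closed_segment z3 z4) f" "continuous_on (closed_segment z4 z1) f"
    using continuous_on_subset[OF assms(3)] unfolding z1_z2_z3_z4_def[symmetric] sides by auto
  then have "contour_integral (rectpath z1 z3) f =
      contour_integral (linepath z1 z2) f + contour_integral (linepath z2 z3) f +
      contour_integral (linepath z3 z4) f + contour_integral (linepath z4 z1) f"
    unfolding rectpath_def Let_def
    by (simp add: contour_integral_join valid_path_join contour_integrable_joinI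
        contour_integrable_continuous_linepath z1_z2_z3_z4_def add.assoc)
  also have "\<dots> = contour_integral (linepath z1 z2) f + contour_integral (linepath z2 z3) f -
      contour_integral (linepath z4 z3) f - contour_integral (linepath z1 z4) f"
    using contour_integral_reverse_linepath[of z3 z4 f] contour_integral_reverse_linepath[of z4 z1 f]
      cont(3,4) by (simp add: closed_segment_commute)
  finally show ?thesis
    using assms(1,2) unfolding z1_z2_z3_z4_def
    by (simp add: contour_integral_linepath_same_Im contour_integral_linepath_same_Re)
qed

lemma contour_integral_rectpath_eq_residues:
  fixes f :: "complex \<Rightarrow> complex"
  assumes "open U" "finite S" "f holomorphic_on U - S"
    and "Re w \<le> Re z" "Im w \<le> Im z" "cbox w z \<subseteq> U" "S \<subseteq> box w z"
  shows "contour_integral (rectpath w z) f = 2 * pi * \<i> * (\<Sum>p\<in>S. residue f p)"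
proof -
  define C where "C = connected_component_set U w"
  have "cbox w z \<subseteq> C"
    unfolding C_def using assms(4-6)
    by (intro connected_component_maximal) (auto simp: convex_connected in_cbox_complex_iff)
  moreover have "open C" "connected C" "C \<subseteq> U"
    unfolding C_def using assms(1) by (auto simp: open_connected_component connected_component_subset)
  moreover have "path_image (rectpath w z) = cbox w z - box w z"
    using assms(4,5) by (rule path_image_rectpath_cbox_minus_box)
  ultimately have "contour_integral (rectpath w z) f =
      2 * pi * \<i> * (\<Sum>p\<in>S. winding_number (rectpath w z) p * residue f p)"
    using assms(2,3,7) holomorphic_on_subset
    by (intro Residue_theorem[where S = C])
       (auto intro!: winding_number_rectpath_outside[OF assms(4,5)])
  also have "\<dots> = 2 * pi * \<i> * (\<Sum>p\<in>S. residue f p)"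
    using assms(7) by (simp add: winding_number_rectpath subset_iff)
  finally show ?thesis .
qed

lemma integral_real_segment_eq_residues_plus_vertical_integrals:
  fixes f :: "complex \<Rightarrow> complex"
  assumes "open U" "{z. Im z \<ge> 0} \<subseteq> U" "finite S" "f holomorphic_on U - S"
    and S: "\<forall>z\<in>S. Im z > 0 \<and> a < Re z \<and> Re z < b"
    and "a < b"
    and left: "has_improper_integral_0_inf (\<lambda>y. f (Complex a y)) Fa"
    and right: "has_improper_integral_0_inf (\<lambda>y. f (Complex b y)) Fb"
    and top: "((\<lambda>y. integral {a..b} (\<lambda>x. f (Complex x y))) \<longlongrightarrow> 0) at_top"
  shows "integral {a..b} (\<lambda>x. f (of_real x)) =
           2 * pi * \<i> * (\<Sum>z\<in>S. residue f z) - \<i> * Fb + \<i> * Fa"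
proof -
  define \<Sigma> where "\<Sigma> = 2 * pi * \<i> * (\<Sum>z\<in>S. residue f z)"
  define I where "I = integral {a..b} (\<lambda>x. f (of_real x))"
  define V where "V x Y = integral {0..Y} (\<lambda>y. f (Complex x y))" for x Y
  define H where "H Y = integral {a..b} (\<lambda>x. f (Complex x Y))" for Y
  have rectangle: "\<Sigma> - \<i> * V b Y + H Y + \<i> * V a Y = I"
    if "Y > 0" "\<forall>z\<in>S. Im z < Y" for Y
  proof -
    have box: "S \<subseteq> box (Complex a 0) (Complex b Y)"
      using S that by (auto simp: in_box_complex_iff)
    have "path_image (rectpath (Complex a 0) (Complex b Y)) \<subseteq> U - S"
      using assms(2) box \<open>a < b\<close> \<open>Y > 0\<close>
      by (auto simp: path_image_rectpath_cbox_minus_box in_cbox_complex_iff)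
    then have "continuous_on (path_image (rectpath (Complex a 0) (Complex b Y))) f"
      using assms(4) holomorphic_on_imp_continuous_on continuous_on_subset by blast
    then have "contour_integral (rectpath (Complex a 0) (Complex b Y)) f =
        integral {a..b} (\<lambda>x. f (Complex x 0)) + \<i> * V b Y - H Y - \<i> * V a Y"
      unfolding V_def H_def by (rule contour_integral_rectpath_eq_sides[OF \<open>a < b\<close> \<open>Y > 0\<close>])
    moreover have "contour_integral (rectpath (Complex a 0) (Complex b Y)) f = \<Sigma>"
      unfolding \<Sigma>_def using assms(1-4) box \<open>a < b\<close> \<open>Y > 0\<close>
      by (intro contour_integral_rectpath_eq_residues) (auto simp: in_cbox_complex_iff)
    moreover have "integral {a..b} (\<lambda>x. f (Complex x 0)) = I"
      unfolding I_def complex_of_real_def ..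
    ultimately show ?thesis by (simp add: algebra_simps)
  qed
  have "\<forall>\<^sub>F Y in at_top. Y > 0 \<and> (\<forall>z\<in>S. Im z < Y)"
    using \<open>finite S\<close> by (intro eventually_conj eventually_ball_finite eventually_gt_at_top) auto
  then have "\<forall>\<^sub>F Y in at_top. \<Sigma> - \<i> * V b Y + H Y + \<i> * V a Y = I"
    by eventually_elim (rule rectangle; blast)
  moreover have "(V a \<longlongrightarrow> Fa) at_top" "(V b \<longlongrightarrow> Fb) at_top" "(H \<longlongrightarrow> 0) at_top"
    using left right top unfolding has_improper_integral_0_inf_def V_def H_def by auto
  then have "((\<lambda>Y. \<Sigma> - \<i> * V b Y + H Y + \<i> * V a Y) \<longlongrightarrow> \<Sigma> - \<i> * Fb + 0 + \<i> * Fa) at_top"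
    by (intro tendsto_intros)
  ultimately have "((\<lambda>Y::real. I) \<longlongrightarrow> \<Sigma> - \<i> * Fb + \<i> * Fa) at_top"
    by (simp add: Lim_transform_eventually)
  then show ?thesis
    unfolding \<Sigma>_def I_def by (simp add: tendsto_const_iff)
qed

theorem theorem1:
  fixes f :: "complex \<Rightarrow> complex" and U S :: "complex set"
  assumes "open U"
    and "{z. Im z \<ge> 0} \<subseteq> U"
    and "finite S" and "S \<subseteq> U"
    and "\<forall>z\<in>S. Im z > 0"
    and "f holomorphic_on (U - S)"
    and cond_i: "\<exists>R F. (\<forall>x::real. \<bar>x\<bar> \<ge> R \<longrightarrow>
                     has_improper_integral_0_inf (\<lambda>y. f (Complex x y)) (F x))
                 \<and> (F \<longlongrightarrow> 0) at_top \<and> (F \<longlongrightarrow> 0) at_bot"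
    and cond_ii: "\<forall>a b::real.
                 ((\<lambda>y. integral {a..b} (\<lambda>x. f (Complex x y))) \<longlongrightarrow> 0) at_top"
  shows "(\<forall>A B::real. (\<lambda>x. f (complex_of_real x)) integrable_on {-A..B})
     \<and> ((\<lambda>(A, B). integral {-A..B} (\<lambda>x. f (complex_of_real x)))
          \<longlongrightarrow> 2 * pi * \<i> * (\<Sum>z\<in>S. residue f z)) (at_top \<times>\<^sub>F at_top)"
proof
  obtain R F where vertical: "\<And>x. \<bar>x\<bar> \<ge> R \<Longrightarrow> has_improper_integral_0_inf (\<lambda>y. f (Complex x y)) (F x)"
    and F_top: "(F \<longlongrightarrow> 0) at_top" and F_bot: "(F \<longlongrightarrow> 0) at_bot"
    using cond_i by blast
  define \<Sigma> where "\<Sigma> = 2 * pi * \<i> * (\<Sum>z\<in>S. residue f z)"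
  have "continuous_on {-A..B} (\<lambda>x. f (complex_of_real x))" for A B
    using assms(2,5)
    by (intro continuous_on_compose2[OF holomorphic_on_imp_continuous_on[OF assms(6)] continuous_on_of_real_id]) auto
  then show "\<forall>A B::real. (\<lambda>x. f (complex_of_real x)) integrable_on {-A..B}"
    by (blast intro: integrable_continuous_interval)
  have large: "\<forall>\<^sub>F A in at_top. A > 0 \<and> A \<ge> R \<and> (\<forall>z\<in>S. \<bar>Re z\<bar> < A)"
    using assms(3) by (intro eventually_conj eventually_ball_finite eventually_gt_at_top eventually_ge_at_top) auto
  have "\<forall>\<^sub>F p in at_top \<times>\<^sub>F at_top.
      integral {-fst p..snd p} (\<lambda>x. f (complex_of_real x)) = \<Sigma> - \<i> * F (snd p) + \<i> * F (- fst p)"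
    using eventually_prodI[OF large large]
  proof (rule eventually_mono)
    fix p :: "real \<times> real"
    assume "(fst p > 0 \<and> fst p \<ge> R \<and> (\<forall>z\<in>S. \<bar>Re z\<bar> < fst p)) \<and>
            (snd p > 0 \<and> snd p \<ge> R \<and> (\<forall>z\<in>S. \<bar>Re z\<bar> < snd p))"
    then show "integral {-fst p..snd p} (\<lambda>x. f (complex_of_real x)) = \<Sigma> - \<i> * F (snd p) + \<i> * F (- fst p)"
      unfolding \<Sigma>_def using assms(5) cond_ii
      by (intro integral_real_segment_eq_residues_plus_vertical_integrals[OF assms(1-3,6)] vertical)
         (auto simp: abs_less_iff)
  qed
  moreover have "((\<lambda>p. \<Sigma> - \<i> * F (snd p) + \<i> * F (- fst p)) \<longlongrightarrow> \<Sigma> - \<i> * 0 + \<i> * 0) (at_top \<times>\<^sub>F at_top)"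
    using filterlim_compose[OF F_top filterlim_snd]
      filterlim_compose[OF F_bot filterlim_compose[OF filterlim_uminus_at_bot_at_top filterlim_fst]]
    by (intro tendsto_intros)
  ultimately show "((\<lambda>(A, B). integral {-A..B} (\<lambda>x. f (complex_of_real x))) \<longlongrightarrow> \<Sigma>) (at_top \<times>\<^sub>F at_top)"
    by (simp add: tendsto_cong case_prod_beta')
qed

end
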